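(* Define, for real $x$, \[ c(x)=\left(\frac{160}{\pi^{5}}-\frac{16}{\pi^{3}}\right)\left(\frac{\pi}{2}-x\right),\qquad d(x)=c(x)+\left(\frac{960}{\pi^{6}}-\frac{96}{\pi^{4}}\right)\left(\frac{\pi}{2}-x\right)^{2}. \] Then for every $x\in\left(\frac{\pi}{2}-\frac{1}{3},\frac{\pi}{2}\right)$, \[ 2+\left(\frac{16}{\pi^{4}}+c(x)\right)x^{3}\tan x<\left(\frac{\sin x}{x}\right)^{2}+\frac{\tan x}{x}, \] and for every $x\in\left(\frac{\pi}{2}-\frac{1}{2},\frac{\pi}{2}\right)$, \[ \left(\frac{\sin x}{x}\right)^{2}+\frac{\tan x}{x}<2+\left(\frac{16}{\pi^{4}}+d(x)\right)x^{3}\tan x. \] *)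

theory Defs
  imports Complex_Main
begin

definition c_fun :: "real \<Rightarrow> real" where
  "c_fun x = (160 / pi ^ 5 - 16 / pi ^ 3) * (pi / 2 - x)"

definition d_fun :: "real \<Rightarrow> real" where
  "d_fun x = c_fun x + (960 / pi ^ 6 - 96 / pi ^ 4) * (pi / 2 - x) ^ 2"

end

theory Submission
  imports Defs "HOL-Analysis.Complex_Transcendental"
begin

text \<open>
  Put \<open>a = \<pi>/2\<close> and \<open>t = a - x\<close>, so that \<open>cos x = sin t\<close> and \<open>sin x = 1 - 2 sin\<^sup>2(t/2)\<close>.
  Clearing the positive denominator \<open>x\<^sup>2 cos x\<close>, each inequality says that
  \<open>A s (1 - s\<^sup>2 - 2x\<^sup>2) + (1 - 2k\<^sup>2) h\<close> has a fixed sign, where \<open>s = sin t\<close>, \<open>k = sin (t/2)\<close>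
  and \<open>h\<close> is a polynomial in \<open>a, t\<close> that vanishes at \<open>t = 0\<close>. This expression is antitone
  in \<open>s\<close> and in \<open>k \<ge> 0\<close>, so replacing \<open>sin\<close> by its Taylor bounds of degree 7 (the upper
  ones for the first inequality, the lower ones for the second) leaves a bivariate polynomial in
  \<open>a, t\<close>. Its sign on the box \<open>a \<in> [1.5707, 1.5708]\<close>, \<open>t \<in> [0, 1/3]\<close> resp. \<open>[0, 1/2]\<close> is certified by
  integer interval arithmetic on a Horner scheme over a grid of subintervals in \<open>t\<close>.
\<close>

fun horner :: "int list \<Rightarrow> real \<Rightarrow> real" where
  "horner [] A = 0"
| "horner (c # cs) A = of_int c + A * horner cs A"

fun horner2 :: "int list list \<Rightarrow> real \<Rightarrow> real \<Rightarrow> real" where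
  "horner2 [] A T = 0"
| "horner2 (v # vs) A T = horner v A + T * horner2 vs A T"

definition mul_lower :: "int \<Rightarrow> int \<Rightarrow> int \<Rightarrow> int" where
  "mul_lower lo hi L = (if 0 \<le> L then lo * L else hi * L)"

fun horner_lower :: "int list \<Rightarrow> int \<Rightarrow> int \<Rightarrow> int" where
  "horner_lower [] lo hi = 0"
| "horner_lower (c # cs) lo hi = c + mul_lower lo hi (horner_lower cs lo hi)"

fun horner2_lower :: "int list list \<Rightarrow> int \<Rightarrow> int \<Rightarrow> int \<Rightarrow> int \<Rightarrow> int" where
  "horner2_lower [] lo hi p q = 0"
| "horner2_lower (v # vs) lo hi p q = horner_lower v lo hi + mul_lower p q (horner2_lower vs lo hi p q)"

text \<open>Pure integer arithmetic, hence decided by \<open>simp\<close>.\<close>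

fun positive_on_cells :: "int list list \<Rightarrow> int \<Rightarrow> int \<Rightarrow> int list \<Rightarrow> bool" where
  "positive_on_cells cs lo hi (p # q # r) =
     (0 \<le> p \<and> p \<le> q \<and> 0 < horner2_lower cs lo hi p q \<and> (r = [] \<or> positive_on_cells cs lo hi (q # r)))"
| "positive_on_cells cs lo hi _ = False"

lemma mul_lower_le:
  fixes A E :: real
  assumes "of_int lo \<le> A" "A \<le> of_int hi" "0 \<le> A" "of_int L \<le> E"
  shows "of_int (mul_lower lo hi L) \<le> A * E"
proof (cases "0 \<le> L")
  case True
  have "of_int lo * of_int L \<le> A * of_int L" using assms True by (intro mult_right_mono) auto
  also have "\<dots> \<le> A * E" using assms by (intro mult_left_mono) auto
  finally show ?thesis using True by (simp add: mul_lower_def)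
next
  case False
  have "of_int hi * of_int L \<le> A * of_int L" using assms False by (intro mult_right_mono_neg) auto
  also have "\<dots> \<le> A * E" using assms by (intro mult_left_mono) auto
  finally show ?thesis using False by (simp add: mul_lower_def)
qed

lemma horner_lower_le:
  assumes "of_int lo \<le> A" "A \<le> of_int hi" "0 \<le> A"
  shows "of_int (horner_lower v lo hi) \<le> horner v A"
  by (induction v) (simp_all add: mul_lower_le[OF assms])

lemma horner2_lower_le:
  assumes "of_int lo \<le> A" "A \<le> of_int hi" "0 \<le> A"
    and "of_int p \<le> T" "T \<le> of_int q" "0 \<le> T"
  shows "of_int (horner2_lower vs lo hi p q) \<le> horner2 vs A T"
proof (induction vs)
  case (Cons v vs)
  then show ?case
    using mul_lower_le[OF assms(4-6) Cons.IH] horner_lower_le[OF assms(1-3), of v] by simp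
qed simp

lemma positive_on_cells_sound:
  assumes "positive_on_cells cs lo hi (p # ps)" "of_int p \<le> T" "T \<le> of_int (last (p # ps))"
    and "of_int lo \<le> A" "A \<le> of_int hi" "0 \<le> lo"
  shows "0 < horner2 cs A T"
  using assms(1-3)
proof (induction ps arbitrary: p)
  case (Cons q r)
  have cell: "0 \<le> p" "p \<le> q" "0 < horner2_lower cs lo hi p q"
    and rest: "r = [] \<or> positive_on_cells cs lo hi (q # r)"
    using Cons.prems(1) by simp_all
  have "0 \<le> A" using assms(4,6) by (meson of_int_0_le_iff order_trans)
  moreover have "0 \<le> T" using Cons.prems(2) cell(1) by (meson of_int_0_le_iff order_trans)
  show ?case
  proof (cases "T \<le> of_int q")
    case True
    have "of_int (horner2_lower cs lo hi p q) \<le> horner2 cs A T"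
      using horner2_lower_le assms(4,5) \<open>0 \<le> A\<close> Cons.prems(2) True \<open>0 \<le> T\<close> by blast
    then show ?thesis using cell(3) by linarith
  next
    case False
    then have "r \<noteq> []" using Cons.prems(3) by auto
    then show ?thesis
      using Cons.IH[of q] rest False Cons.prems(3) by auto
  qed
qed simp

lemma half_pi_bounds: "15707 / 10^4 \<le> pi / 2" "pi / 2 \<le> 15708 / 10^4"
  using pi_approx by simp_all

definition sin_taylor5 :: "real \<Rightarrow> real" where
  "sin_taylor5 t = t - t^3 / 6 + t^5 / 120"

lemma sin_taylor5_error:
  fixes t :: real
  assumes "0 \<le> t"
  shows "\<bar>sin t - sin_taylor5 t\<bar> \<le> t^7 / 5040"
proof -
  have "(\<Sum>m<7. sin_coeff m * t^m) = sin_taylor5 t"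
    by (simp add: sin_taylor5_def sin_coeff_def lessThan_nat_numeral fact_numeral)
  moreover have "inverse (fact 7) * \<bar>t\<bar> ^ 7 = t^7 / 5040"
    using assms by (simp add: fact_numeral field_simps)
  ultimately show ?thesis
    using Maclaurin_sin_bound[of t 7] by simp
qed

definition sin_lower :: "real \<Rightarrow> real" where
  "sin_lower t = sin_taylor5 t - t^7 / 5040"

definition sin_upper :: "real \<Rightarrow> real" where
  "sin_upper t = sin_taylor5 t + t^7 / 5040"

lemma sin_lower_le: "0 \<le> t \<Longrightarrow> sin_lower t \<le> sin t"
  using sin_taylor5_error[of t] unfolding sin_lower_def abs_le_iff by linarith

lemma sin_le_sin_upper: "0 \<le> t \<Longrightarrow> sin t \<le> sin_upper t"
  using sin_taylor5_error[of t] unfolding sin_upper_def abs_le_iff by linarith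

lemma sin_lower_nonneg:
  assumes "0 \<le> t" "t \<le> 1"
  shows "0 \<le> sin_lower t"
proof -
  have "t^3 \<le> t" "t^7 \<le> t"
    using assms power_decreasing[of 1 3 t] power_decreasing[of 1 7 t] by simp_all
  moreover have "0 \<le> t^5" using assms by simp
  ultimately show ?thesis using assms unfolding sin_lower_def sin_taylor5_def by linarith
qed

lemma sin_upper_scaled: "5040 * sin_upper t = 5040 * t - 840 * t^3 + 42 * t^5 + t^7"
  by (simp add: sin_upper_def sin_taylor5_def algebra_simps)

lemma sin_lower_scaled: "5040 * sin_lower t = 5040 * t - 840 * t^3 + 42 * t^5 - t^7"
  by (simp add: sin_lower_def sin_taylor5_def algebra_simps)

lemma sin_upper_half_scaled: "645120 * sin_upper (t / 2) = 322560 * t - 13440 * t^3 + 168 * t^5 + t^7"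
  by (simp add: sin_upper_def sin_taylor5_def field_simps)

lemma sin_lower_half_scaled: "645120 * sin_lower (t / 2) = 322560 * t - 13440 * t^3 + 168 * t^5 - t^7"
  by (simp add: sin_lower_def sin_taylor5_def field_simps)

definition numer :: "real \<Rightarrow> real \<Rightarrow> real \<Rightarrow> real \<Rightarrow> real \<Rightarrow> real" where
  "numer A x s k h = A * s * (1 - s^2 - 2 * x^2) + (1 - 2 * k^2) * h"

lemma tan_expression_eq_numer:
  fixes A L t x :: real
  assumes "x = pi / 2 - t" "x \<noteq> 0" "sin t \<noteq> 0" "A \<noteq> 0"
  shows "(sin x / x)^2 + tan x / x - (2 + L / A * x^3 * tan x)
           = numer A x (sin t) (sin (t / 2)) (A * x - L * x^5) / (A * x^2 * sin t)"
proof -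
  define s c k where "s = sin t" and "c = cos t" and "k = sin (t / 2)"
  have c_sq: "c^2 = 1 - s^2" using sin_cos_squared_add[of t] unfolding s_def c_def by linarith
  have c_half: "c = 1 - 2 * k^2" using cos_double_sin[of "t / 2"] unfolding c_def k_def by simp
  have "(sin x / x)^2 + tan x / x - (2 + L / A * x^3 * tan x)
          = (c / x)^2 + c / s / x - (2 + L / A * x^3 * (c / s))"
    unfolding assms(1) s_def c_def tan_def by (simp add: cos_sin_eq[of t] sin_cos_eq[of t])
  also have "\<dots> = (A * c^2 * s + A * x * c - 2 * A * x^2 * s - L * x^5 * c) / (A * x^2 * s)"
    using assms(2-4) unfolding s_def[symmetric] by (simp add: field_simps) (simp add: eval_nat_numeral)
  also have "A * c^2 * s + A * x * c - 2 * A * x^2 * s - L * x^5 * c = numer A x s k (A * x - L * x^5)"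
    unfolding numer_def using c_sq c_half by algebra
  finally show ?thesis unfolding s_def k_def .
qed

lemma numer_antitone:
  assumes "0 \<le> A" "1 \<le> 2 * x^2" "0 \<le> h" "s \<le> s'" "0 \<le> k" "k \<le> k'"
  shows "numer A x s' k' h \<le> numer A x s k h"
proof -
  have "s * (1 - s^2 - 2 * x^2) - s' * (1 - s'^2 - 2 * x^2)
          = (s' - s) * ((2 * x^2 - 1) + (s^2 + s * s' + s'^2))"
    by (simp add: algebra_simps power2_eq_square power3_eq_cube)
  moreover have "s^2 + s * s' + s'^2 = (s + s' / 2)^2 + 3 / 4 * s'^2"
    by (simp add: power2_eq_square algebra_simps)
  then have "0 \<le> s^2 + s * s' + s'^2" by simp
  ultimately have "s' * (1 - s'^2 - 2 * x^2) \<le> s * (1 - s^2 - 2 * x^2)"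
    using assms(2,4) by (smt (verit) mult_nonneg_nonneg)
  then have "A * s' * (1 - s'^2 - 2 * x^2) \<le> A * s * (1 - s^2 - 2 * x^2)"
    using mult_left_mono[OF _ assms(1)] by (simp add: mult.assoc)
  moreover have "k^2 \<le> k'^2" using assms(5,6) by (intro power_mono) auto
  then have "(1 - 2 * k'^2) * h \<le> (1 - 2 * k^2) * h" using assms(3) by (intro mult_right_mono) auto
  ultimately show ?thesis unfolding numer_def by linarith
qed

lemma numer_scaled:
  "5040^3 * 128^2 * numer A x s k h
     = 128^2 * A * (5040 * s) * (5040^2 - (5040 * s)^2 - 2 * 5040^2 * x^2)
       + 5040 * (645120^2 - 2 * (645120 * k)^2) * h"
  unfolding numer_def by algebra

text \<open>
  In a coefficient table, row \<open>j\<close> and column \<open>i\<close> hold the coefficient of \<open>T\<^sup>j A\<^sup>i\<close>, where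
  \<open>A = 10\<^sup>4 a\<close> and \<open>T\<close> is a multiple of \<open>t\<close>, so that the box has integer corners.
\<close>

definition Hc :: "real \<Rightarrow> real \<Rightarrow> real" where
  "Hc a t = (5) * t^5 + (-24) * a^1 * t^4 + (45) * a^2 * t^3 + (-2) * a^2 * t^5 + (-40) * a^3 * t^2 + (10) * a^3 * t^4 + (15) * a^4 * t^1 + (-20) * a^4 * t^3 + (-1) * a^5 + (20) * a^5 * t^2 + (-10) * a^6 * t^1 + (2) * a^7"

definition Hc_coeffs :: "int list list" where
  "Hc_coeffs = [[0, 0, 0, 0, 0, -24300000000, 0, 486], [0, 0, 0, 0, 1215000000000000, 0, -8100000, 0], [0, 0, 0, -10800000000000000000, 0, 54000000000, 0, 0], [0, 0, 40500000000000000000000, 0, -180000000000000, 0, 0, 0], [0, -72000000000000000000000000, 0, 300000000000000000, 0, 0, 0, 0], [50000000000000000000000000000, 0, -200000000000000000000, 0, 0, 0, 0, 0]]"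

lemma Hc_pos:
  assumes "15707 / 10^4 \<le> a" "a \<le> 15708 / 10^4" "0 \<le> t" "t \<le> 1 / 3"
  shows "0 < Hc a t"
proof -
  have "0 < horner2 Hc_coeffs (10^4 * a) (3 * t)"
    by (rule positive_on_cells_sound[where p = 0 and ps = "[1]" and lo = 15707 and hi = 15708])
       (use assms in \<open>simp_all add: Hc_coeffs_def mul_lower_def field_simps\<close>)
  also have "horner2 Hc_coeffs (10^4 * a) (3 * t) = 10^28 * 3^5 * Hc a t"
    unfolding Hc_coeffs_def Hc_def
    by (simp only: horner2.simps horner.simps of_int_numeral of_int_neg_numeral of_int_0 of_int_minus)
       algebra
  finally show ?thesis by (simp add: zero_less_mult_iff)
qed

definition Hd :: "real \<Rightarrow> real \<Rightarrow> real" where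
  "Hd a t = (15) * t^6 + (-70) * a^1 * t^5 + (126) * a^2 * t^4 + (-6) * a^2 * t^6 + (-105) * a^3 * t^3 + (28) * a^3 * t^5 + (35) * a^4 * t^2 + (-50) * a^4 * t^4 + (40) * a^5 * t^3 + (-1) * a^6 + (-10) * a^6 * t^2 + (-4) * a^7 * t^1 + (2) * a^8"

definition Hd_coeffs :: "int list list" where
  "Hd_coeffs = [[0, 0, 0, 0, 0, 0, -6400000000, 0, 128], [0, 0, 0, 0, 0, 0, 0, -1280000, 0], [0, 0, 0, 0, 5600000000000000000, 0, -16000000000, 0, 0], [0, 0, 0, -84000000000000000000000, 0, 320000000000000, 0, 0, 0], [0, 0, 504000000000000000000000000, 0, -2000000000000000000, 0, 0, 0, 0], [0, -1400000000000000000000000000000, 0, 5600000000000000000000, 0, 0, 0, 0, 0], [1500000000000000000000000000000000, 0, -6000000000000000000000000, 0, 0, 0, 0, 0, 0]]"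

lemma Hd_pos:
  assumes "15707 / 10^4 \<le> a" "a \<le> 15708 / 10^4" "0 \<le> t" "t \<le> 1 / 2"
  shows "0 < Hd a t"
proof -
  have "0 < horner2 Hd_coeffs (10^4 * a) (2 * t)"
    by (rule positive_on_cells_sound[where p = 0 and ps = "[1]" and lo = 15707 and hi = 15708])
       (use assms in \<open>simp_all add: Hd_coeffs_def mul_lower_def field_simps\<close>)
  also have "horner2 Hd_coeffs (10^4 * a) (2 * t) = 10^32 * 2^6 * Hd a t"
    unfolding Hd_coeffs_def Hd_def
    by (simp only: horner2.simps horner.simps of_int_numeral of_int_neg_numeral of_int_0 of_int_minus)
       algebra
  finally show ?thesis by (simp add: zero_less_mult_iff)
qed

definition Rc :: "real \<Rightarrow> real \<Rightarrow> real" where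
  "Rc a t = (10487731322880000) * t^4 + (-5243865661440000) * t^6 + (436988805120000) * t^8 + (-14566293504000) * t^10 + (195084288000) * t^12 + (-67737600) * t^14 + (-16934400) * t^16 + (-50400) * t^18 + (-50341110349824000) * a^1 * t^3 + (25170555174912000) * a^1 * t^5 + (-2097546264576000) * a^1 * t^7 + (69918208819200) * a^1 * t^9 + (-936404582400) * a^1 * t^11 + (325140480) * a^1 * t^13 + (81285120) * a^1 * t^15 + (241920) * a^1 * t^17 + (94389581905920000) * a^2 * t^2 + (-51389883482112000) * a^2 * t^4 + (6030445510656000) * a^2 * t^6 + (-305892163584000) * a^2 * t^8 + (7582275993600) * a^2 * t^10 + (-78643353600) * a^2 * t^12 + (-125314560) * a^2 * t^14 + (6320160) * a^2 * t^16 + (20160) * a^2 * t^18 + (-83901850583040000) * a^3 * t^1 + (62926387937280000) * a^3 * t^3 + (-13983641763840000) * a^3 * t^5 + (990507958272000) * a^3 * t^7 + (-30693261312000) * a^3 * t^9 + (390710476800) * a^3 * t^11 + (-33465600) * a^3 * t^15 + (-100800) * a^3 * t^17 + (31463193968640000) * a^4 + (-57682522275840000) * a^4 * t^2 + (22286429061120000) * a^4 * t^4 + (-1791654100992000) * a^4 * t^6 + (58850426880000) * a^4 * t^8 + (-780540364800) * a^4 * t^10 + (220147200) * a^4 * t^12 + (67586400) * a^4 * t^14 + (201600) * a^4 * t^16 + (36357468585984000) * a^5 * t^1 + (-19297425634099200) * a^5 * t^3 + (1489091375923200) * a^5 * t^5 + (-33194675404800) * a^5 * t^7 + (-697087641600)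 * a^5 * t^9 + (17073262080) * a^5 * t^11 + (1938853728) * a^5 * t^13 + (-45618048) * a^5 * t^15 + (-2064384) * a^5 * t^17 + (-16384) * a^5 * t^19 + (-12585277587456000) * a^6 + (9089367146496000) * a^6 * t^2 + (-804059401420800) * a^6 * t^4 + (30797306265600) * a^6 * t^6 + (-390168576000) * a^6 * t^8 + (135475200) * a^6 * t^10 + (33868800) * a^6 * t^12 + (100800) * a^6 * t^14 + (-1398364176384000) * a^7 * t^1 + (139836417638400) * a^7 * t^3 + (-6658877030400) * a^7 * t^5 + (78033715200) * a^7 * t^7 + (-27095040) * a^7 * t^9 + (-6773760) * a^7 * t^11 + (-20160) * a^7 * t^13"

definition Rc_coeffs :: "int list list" where
  "Rc_coeffs = [[0, 0, 0, 0, 10051861189298894268003697526046720000000000000000, 0, -40207444757195577072014790104186880000000, 0], [0, 0, 0, -22337469309553098373341550057881600000000000000000000, 0, 96795700341396759617813383584153600000000000, 0, -37229115515921830622235916763136000], [0, 0, 20941377477706029725007703179264000000000000000000000000, 0, -127975084585981292763935963873280000000000000000, 0, 201657709044576582537111215800320000000, 0], [0, -9307278878980457655558979190784000000000000000000000000000, 0, 116340985987255720694487239884800000000000000000000, 0, -356779023694250876796427535646720000000000, 0, 25853552441612382376552719974400], [1615847027600773898534544998400000000000000000000000000000000, 0, -79176504352437921028192704921600000000000000000000000, 0, 343367493365164453438590812160000000000000000, 0, -123881605449392665554315116544000000, 0], [0, 32316940552015477970690899968000000000000000000000000000, 0, -179538558622308210948282777600000000000000000000, 0, 191187191294827017491951124480000000000,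 0, -8549455172490867188013465600], [-5610579956947131592133836800000000000000000000000000000000, 0, 64521669504892013309539123200000000000000000000000, 0, -191694815195693662731239424000000000000000, 0, 32951025143975217287135232000000, 0], [0, -18701933189823771973779456000000000000000000000000000, 0, 88314684507501145431736320000000000000000000, 0, -29596706025644969825402880000000000, 0, 695756443073801040691200], [3246863401011071523225600000000000000000000000000000000, 0, -22728043807077500662579200000000000000000000000, 0, 43726359790402079293440000000000000000, 0, -2898985179474171002880000000, 0], [0, 4329151201348095364300800000000000000000000000000, 0, -19004458398775121018880000000000000000000, 0, -4316182940099637411840000000000, 0, -1677653460343848960], [-751588750234044334080000000000000000000000000000000, 0, 3912287869521855774720000000000000000000000, 0, -4027416838237952409600000000000000, 0, 6990222751432704000000, 0], [0, -402636830482523750400000000000000000000000000, 0, 1679983534594326528000000000000000000, 0, 734119018541088768000000000, 0, -2912592813096960], [69902227514327040000000000000000000000000000000, 0, -281793354667130880000000000000000000000, 0, 7888272202137600000000000000, 0, 12135803387904000000, 0], [0, 970864271032320000000000000000000000000, 0, 0, 0, 578938621014835200000000, 0, -60197437440], [-168552824832000000000000000000000000000000, 0, -3118227259392000000000000000000000, 0, 16817659084800000000000000, 0, 250822656000000, 0], [0, 1685528248320000000000000000000000000, 0, -6939426816000000000000000000, 0, -94593584332800000000, 0, 0], [-292626432000000000000000000000000000000, 0, 1092123648000000000000000000000, 0, 348364800000000000000, 0, 0, 0], [0, 34836480000000000000000000000000, 0, -145152000000000000000000, 0, -29727129600000000, 0, 0], [-6048000000000000000000000000000000, 0, 24192000000000000000000000,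 0, 0, 0, 0, 0], [0, 0, 0, 0, 0, -1638400000000, 0, 0]]"

lemma Rc_pos:
  assumes "15707 / 10^4 \<le> a" "a \<le> 15708 / 10^4" "0 \<le> t" "t \<le> 1 / 3"
  shows "0 < Rc a t"
proof -
  have "0 < horner2 Rc_coeffs (10^4 * a) (12 * t)"
    by (rule positive_on_cells_sound[where p = 0 and ps = "[1, 2, 3, 4]" and lo = 15707 and hi = 15708])
       (use assms in \<open>simp_all add: Rc_coeffs_def mul_lower_def field_simps\<close>)
  also have "horner2 Rc_coeffs (10^4 * a) (12 * t) = 10^28 * 12^19 * Rc a t"
    unfolding Rc_coeffs_def Rc_def
    by (simp only: horner2.simps horner.simps of_int_numeral of_int_neg_numeral of_int_0 of_int_minus)
       algebra
  finally show ?thesis by (simp add: zero_less_mult_iff)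
qed

definition Rd :: "real \<Rightarrow> real \<Rightarrow> real" where
  "Rd a t = (-31463193968640000) * t^4 + (15731596984320000) * t^6 + (-1310966415360000) * t^8 + (43698880512000) * t^10 + (-780337152000) * t^12 + (8331724800) * t^14 + (-50803200) * t^16 + (151200) * t^18 + (146828238520320000) * a^1 * t^3 + (-73414119260160000) * a^1 * t^5 + (6117843271680000) * a^1 * t^7 + (-203928109056000) * a^1 * t^9 + (3641573376000) * a^1 * t^11 + (-38881382400) * a^1 * t^13 + (237081600) * a^1 * t^15 + (-705600) * a^1 * t^17 + (-264290829336576000) * a^2 * t^2 + (144730692255744000) * a^2 * t^4 + (-17304756682752000) * a^2 * t^6 + (891457162444800) * a^2 * t^8 + (-24034384281600) * a^2 * t^10 + (382121349120) * a^2 * t^12 + (-3759436800) * a^2 * t^14 + (21591360) * a^2 * t^16 + (-60480) * a^2 * t^18 + (220242357780480000) * a^3 * t^1 + (-168852474298368000) * a^3 * t^3 + (38542412611584000) * a^3 * t^5 + (-2753029472256000) * a^3 * t^7 + (87033603686400) * a^3 * t^9 + (-1514951424000) * a^3 * t^11 + (15908175360) * a^3 * t^13 + (-95891040) * a^3 * t^15 + (282240) * a^3 * t^17 + (-73414119260160000) * a^4 + (141584372858880000) * a^4 * t^2 + (-55497578250240000) * a^4 * t^4 + (4471852105728000) * a^4 * t^6 + (-147483721728000) * a^4 * t^8 + (2620564531200) * a^4 * t^10 + (-27890956800) * a^4 * t^12 + (169696800) * a^4 * t^14 + (-504000) * a^4 * t^16 + (-83901850583040000) * a^5 * t^1 +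 (41950925291520000) * a^5 * t^3 + (-3495910440960000) * a^5 * t^5 + (116530348032000) * a^5 * t^7 + (-2080899072000) * a^5 * t^9 + (22217932800) * a^5 * t^11 + (-135475200) * a^5 * t^13 + (403200) * a^5 * t^15 + (26568919351296000) * a^6 + (-12165768334540800) * a^6 * t^2 + (1133673814425600) * a^6 * t^4 + (-58351878144000) * a^6 * t^6 + (2829467289600) * a^6 * t^8 + (-133873205760) * a^6 * t^10 + (4963607712) * a^6 * t^12 + (-128092608) * a^6 * t^14 + (2064384) * a^6 * t^16 + (-16384) * a^6 * t^18 + (-2796728352768000) * a^7 * t^1 + (279672835276800) * a^7 * t^3 + (-9988315545600) * a^7 * t^5 + (208089907200) * a^7 * t^7 + (-2221793280) * a^7 * t^9 + (13547520) * a^7 * t^11 + (-40320) * a^7 * t^13 + (1398364176384000) * a^8 + (-139836417638400) * a^8 * t^2 + (4994157772800) * a^8 * t^4 + (-104044953600) * a^8 * t^6 + (1110896640) * a^8 * t^8 + (-6773760) * a^8 * t^10 + (20160) * a^8 * t^12"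

definition Rd_coeffs :: "int list list" where
  "Rd_coeffs = [[0, 0, 0, 0, -908822776810240630821815510942748141158400000000000000000000, 0, 3289072906551347044878951372935659939430400000000000, 0, 1731091003448077392041553354176663126016000], [0, 0, 0, 852021353259600591395452041508826382336000000000000000000000000, 0, -3245795631465145110077912539081243361280000000000000000, 0, -1081931877155048370025970846360414453760000000, 0], [0, 0, -319508007472350221773294515565809893376000000000000000000000000000, 0, 1711650040030447616642649190531124428800000000000000000000, 0, -1470751145507643878004054119271188398080000000000, 0, -169051855805476307816557944743814758400], [0, 55470140186171913502308075619064217600000000000000000000000000000000, 0, -637906612140977005276542869619238502400000000000000000000000, 0, 1584861148176340385780230731973263360000000000000000, 0, 105657409878422692385348715464884224000000, 0], [-3714518316038297779172415778062336000000000000000000000000000000000000, 0, 170867842537761697841931125790867456000000000000000000000000000, 0, -655199758523421969381801116408217600000000000000000000, 0, 133840580593760888233672758987325440000000000, 0, 5896060819108409173289548854067200], [0, -27085029387779254639798865048371200000000000000000000000000000000, 0, 142196404285841086858944041503948800000000000000000000000, 0, -128976330417996450665708881182720000000000000000, 0, -3685038011942755733305968033792000000, 0], [1813729646503075087486531141632000000000000000000000000000000000000, 0, -19951026111533825962351842557952000000000000000000000000000, 0, 51556944581152227023922690785280000000000000000000, 0, -6727513514641586937160689254400000000000, 0, -119955664451261579860220313600], [0, 2204185334291931529931548262400000000000000000000000000000000, 0, -9918834004313691884691967180800000000000000000000000, 0, 4198448255794155295107710976000000000000000, 0, 74972290282038487412637696000000, 0], [-147601696492763272093630464000000000000000000000000000000000000,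 0, 1003691536150790250236687155200000000000000000000000000, 0, -1660519085543586811053342720000000000000000000, 0, 318569695777489182303191040000000000, 0, 1250758423487784010383360], [0, -71750824683982146156625920000000000000000000000000000000, 0, 306222269633423802347028480000000000000000000000, 0, -73215127228553210363904000000000000000, 0, -781724014679865006489600000, 0], [4804742724373804430131200000000000000000000000000000000000, 0, -26426084984055924365721600000000000000000000000000, 0, 28813411733917623386112000000000000000000, 0, -14719514638076897918976000000000, 0, -7447827883763957760], [0, 1251235084472344903680000000000000000000000000000000, 0, -5205333456886903603200000000000000000000000, 0, 763402358085805670400000000000000, 0, 4654892427352473600000, 0], [-83788063692344524800000000000000000000000000000000000, 0, 410299674393449594880000000000000000000000000, 0, -299476868275372032000000000000000000, 0, 532963319830334668800000000, 0, 21646635171840], [0, -13046427018067968000000000000000000000000000000, 0, 53378978836119552000000000000000000000, 0, -4545793386086400000000000000, 0, -13529146982400000, 0], [873644666388480000000000000000000000000000000000, 0, -3942055201996800000000000000000000000000, 0, 1779399917568000000000000000000, 0, -13431483452620800000000, 0, 0], [0, 77686898688000000000000000000000000000000, 0, -314215759872000000000000000000000, 0, 13212057600000000000000, 0, 0, 0], [-5202247680000000000000000000000000000000000, 0, 22109552640000000000000000000000000, 0, -5160960000000000000000000, 0, 211392921600000000, 0, 0], [0, -225792000000000000000000000000000000, 0, 903168000000000000000000000, 0, 0, 0, 0, 0], [15120000000000000000000000000000000000, 0, -60480000000000000000000000000, 0, 0, 0, -1638400000000, 0, 0]]"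

lemma Rd_pos:
  assumes "15707 / 10^4 \<le> a" "a \<le> 15708 / 10^4" "0 \<le> t" "t \<le> 1 / 2"
  shows "0 < Rd a t"
proof -
  have "0 < horner2 Rd_coeffs (10^4 * a) (32 * t)"
    by (rule positive_on_cells_sound[where p = 0 and lo = 15707 and hi = 15708
          and ps = "[1, 2, 3, 4, 5, 6, 7, 8, 9, 10, 11, 12, 13, 14, 15, 16]"])
       (use assms in \<open>simp_all add: Rd_coeffs_def mul_lower_def field_simps\<close>)
  also have "horner2 Rd_coeffs (10^4 * a) (32 * t) = 10^32 * 32^18 * Rd a t"
    unfolding Rd_coeffs_def Rd_def
    by (simp only: horner2.simps horner.simps of_int_numeral of_int_neg_numeral of_int_0 of_int_minus)
       algebra
  finally show ?thesis by (simp add: zero_less_mult_iff)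
qed

lemma numer_sin_upper_pos:
  assumes "15707 / 10^4 \<le> a" "a \<le> 15708 / 10^4" "0 < t" "t < 1 / 3"
  shows "0 < numer (a^5) (a - t) (sin_upper t) (sin_upper (t / 2)) (t * Hc a t)"
proof -
  have "0 < t^2 * Rc a t" using Rc_pos[of a t] assms by simp
  also have "t^2 * Rc a t
      = 5040^3 * 128^2 * numer (a^5) (a - t) (sin_upper t) (sin_upper (t / 2)) (t * Hc a t)"
    unfolding numer_scaled sin_upper_scaled sin_upper_half_scaled Hc_def Rc_def by algebra
  finally show ?thesis by (simp add: zero_less_mult_iff)
qed

lemma numer_sin_lower_neg:
  assumes "15707 / 10^4 \<le> a" "a \<le> 15708 / 10^4" "0 < t" "t < 1 / 2"
  shows "numer (a^6) (a - t) (sin_lower t) (sin_lower (t / 2)) (t * Hd a t) < 0"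
proof -
  have "5040^3 * 128^2 * numer (a^6) (a - t) (sin_lower t) (sin_lower (t / 2)) (t * Hd a t)
      = - (t^3 * Rd a t)"
    unfolding numer_scaled sin_lower_scaled sin_lower_half_scaled Hd_def Rd_def by algebra
  also have "\<dots> < 0" using Rd_pos[of a t] assms by simp
  finally show ?thesis by (simp add: mult_less_0_iff)
qed

lemma c_fun_coeff:
  "16 / pi ^ 4 + c_fun x = (pi / 2 + (5 - 2 * (pi / 2)^2) * (pi / 2 - x)) / (pi / 2)^5"
  using pi_gt_zero by (simp add: c_fun_def field_simps) algebra

lemma d_fun_coeff:
  "16 / pi ^ 4 + d_fun x
     = ((pi / 2)^2 + (5 * (pi / 2) - 2 * (pi / 2)^3) * (pi / 2 - x)
         + (15 - 6 * (pi / 2)^2) * (pi / 2 - x)^2) / (pi / 2)^6"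
  using pi_gt_zero by (simp add: d_fun_def c_fun_def field_simps) algebra

lemma c_fun_inequality:
  fixes x :: real
  assumes "pi / 2 - 1 / 3 < x" "x < pi / 2"
  shows "2 + (16 / pi ^ 4 + c_fun x) * x ^ 3 * tan x < (sin x / x) ^ 2 + tan x / x"
proof -
  define a t where "a = pi / 2" and "t = a - x"
  have a: "15707 / 10^4 \<le> a" "a \<le> 15708 / 10^4" using half_pi_bounds unfolding a_def by simp_all
  have t: "0 < t" "t < 1 / 3" using assms unfolding a_def t_def by simp_all
  have x: "x = a - t" "x = pi / 2 - t" "1 \<le> x" using a t unfolding a_def t_def by simp_all
  have "0 < sin t" using t pi_gt3 by (intro sin_gt_zero) auto
  have coeff: "16 / pi ^ 4 + c_fun x = (a + (5 - 2 * a^2) * t) / a^5"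
    using c_fun_coeff[of x] unfolding a_def[symmetric] t_def[symmetric] .
  have gap: "a^5 * x - (a + (5 - 2 * a^2) * t) * x^5 = t * Hc a t"
    unfolding Hc_def x(1) by algebra
  have eq: "(sin x / x)^2 + tan x / x - (2 + (16 / pi ^ 4 + c_fun x) * x^3 * tan x)
              = numer (a^5) x (sin t) (sin (t / 2)) (t * Hc a t) / (a^5 * x^2 * sin t)"
    unfolding coeff gap[symmetric]
    by (rule tan_expression_eq_numer) (use x a \<open>0 < sin t\<close> in auto)
  have "numer (a^5) x (sin_upper t) (sin_upper (t / 2)) (t * Hc a t)
          \<le> numer (a^5) x (sin t) (sin (t / 2)) (t * Hc a t)"
  proof (rule numer_antitone)
    show "1 \<le> 2 * x^2" using one_le_power[OF x(3), of 2] by linarith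
    show "0 \<le> t * Hc a t" using Hc_pos[of a t] a t by simp
    show "0 \<le> sin (t / 2)" using t pi_gt3 by (intro sin_ge_zero) auto
  qed (use a t sin_le_sin_upper in auto)
  then have "0 < numer (a^5) x (sin t) (sin (t / 2)) (t * Hc a t)"
    using numer_sin_upper_pos[OF a t] unfolding x(1) by linarith
  moreover have "0 < a^5 * x^2 * sin t" using a x(3) \<open>0 < sin t\<close> by simp
  ultimately have "0 < numer (a^5) x (sin t) (sin (t / 2)) (t * Hc a t) / (a^5 * x^2 * sin t)"
    by (rule divide_pos_pos)
  then show ?thesis using eq by linarith
qed

lemma d_fun_inequality:
  fixes x :: real
  assumes "pi / 2 - 1 / 2 < x" "x < pi / 2"
  shows "(sin x / x) ^ 2 + tan x / x < 2 + (16 / pi ^ 4 + d_fun x) * x ^ 3 * tan x"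
proof -
  define a t where "a = pi / 2" and "t = a - x"
  have a: "15707 / 10^4 \<le> a" "a \<le> 15708 / 10^4" using half_pi_bounds unfolding a_def by simp_all
  have t: "0 < t" "t < 1 / 2" using assms unfolding a_def t_def by simp_all
  have x: "x = a - t" "x = pi / 2 - t" "1 \<le> x" using a t unfolding a_def t_def by simp_all
  have "0 < sin t" using t pi_gt3 by (intro sin_gt_zero) auto
  define M where "M = a^2 + (5 * a - 2 * a^3) * t + (15 - 6 * a^2) * t^2"
  have coeff: "16 / pi ^ 4 + d_fun x = M / a^6"
    using d_fun_coeff[of x] unfolding a_def[symmetric] t_def[symmetric] M_def .
  have gap: "a^6 * x - M * x^5 = t * Hd a t"
    unfolding Hd_def M_def x(1) by algebra
  have eq: "(sin x / x)^2 + tan x / x - (2 + (16 / pi ^ 4 + d_fun x) * x^3 * tan x)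
              = numer (a^6) x (sin t) (sin (t / 2)) (t * Hd a t) / (a^6 * x^2 * sin t)"
    unfolding coeff gap[symmetric]
    by (rule tan_expression_eq_numer) (use x a \<open>0 < sin t\<close> in auto)
  have "numer (a^6) x (sin t) (sin (t / 2)) (t * Hd a t)
          \<le> numer (a^6) x (sin_lower t) (sin_lower (t / 2)) (t * Hd a t)"
  proof (rule numer_antitone)
    show "1 \<le> 2 * x^2" using one_le_power[OF x(3), of 2] by linarith
    show "0 \<le> t * Hd a t" using Hd_pos[of a t] a t by simp
    show "0 \<le> sin_lower (t / 2)" using t by (intro sin_lower_nonneg) auto
  qed (use a t sin_lower_le in auto)
  then have "numer (a^6) x (sin t) (sin (t / 2)) (t * Hd a t) < 0"
    using numer_sin_lower_neg[OF a t] unfolding x(1) by linarith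
  moreover have "0 < a^6 * x^2 * sin t" using a x(3) \<open>0 < sin t\<close> by simp
  ultimately have "numer (a^6) x (sin t) (sin (t / 2)) (t * Hd a t) / (a^6 * x^2 * sin t) < 0"
    by (rule divide_neg_pos)
  then show ?thesis using eq by linarith
qed

theorem theorem2:
  shows "(\<forall>x::real. pi / 2 - 1 / 3 < x \<and> x < pi / 2 \<longrightarrow>
            2 + (16 / pi ^ 4 + c_fun x) * x ^ 3 * tan x < (sin x / x) ^ 2 + tan x / x)
       \<and> (\<forall>x::real. pi / 2 - 1 / 2 < x \<and> x < pi / 2 \<longrightarrow>
            (sin x / x) ^ 2 + tan x / x < 2 + (16 / pi ^ 4 + d_fun x) * x ^ 3 * tan x)"
  using c_fun_inequality d_fun_inequality by blast

end
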